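(* Let $\Lambda$ be a $\sigma$-finite measure on $\mathcal Y\subseteq\mathbb R$, and let $\{p(y|x,\theta):\theta\in\Theta\}$, $\Theta\subseteq\mathbb R^m$ open, be a parametric family of positive conditional densities with respect to $\Lambda$, differentiable in $\theta$, such that differentiation in $\theta$ under the integral sign is permitted. Fix $\gamma\in\mathbb R\setminus\{0,-1\}$ and define the $\gamma$-expression $$p^{(\gamma)}(y|x,\theta)=\frac{p(y|x,\theta)^{\gamma+1}}{\int_{\mathcal Y}p(\tilde y|x,\theta)^{\gamma+1}\,\mathrm d\Lambda(\tilde y)}$$ (assumed well defined), the $\gamma$-loss $L_\gamma(\theta;\Lambda)=-\frac1n\frac1\gamma\sum_{i=1}^n\{p^{(\gamma)}(Y_i|X_i,\theta)\}^{\gamma/(\gamma+1)}$ and the $\gamma$-estimating function $S_\gamma(\theta;\Lambda)=\partial L_\gamma(\theta;\Lambda)/\partial\theta$. Suppose that, conditionally on $\underline X=(X_1,\dots,X_n)$, each $Y_i$ has density $p(\cdot|X_i,\theta_0)$ for some $\theta_0\in\Theta$. Then $\mathbb E_0[S_\gamma(\theta_0;\Lambda)\mid\underline X]=0$, where $\mathbb E_0$ denotes conditional expectation under these true distributions. *)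

theory Defs
  imports "HOL-Probability.Probability"
begin

text \<open>Conditional densities p x theta y, with x a covariate value, theta a parameter
  in R^m (modelled as real^'m) and y a response in the space of the measure Lambda.\<close>

definition gamma_norm :: "real measure \<Rightarrow> ('x \<Rightarrow> real^'m \<Rightarrow> real \<Rightarrow> real) \<Rightarrow> real
    \<Rightarrow> 'x \<Rightarrow> real^'m \<Rightarrow> real" where
  "gamma_norm Lam p \<gamma> x \<theta> = (\<integral>y. p x \<theta> y powr (\<gamma> + 1) \<partial>Lam)"

definition gamma_expr :: "real measure \<Rightarrow> ('x \<Rightarrow> real^'m \<Rightarrow> real \<Rightarrow> real) \<Rightarrow> real
    \<Rightarrow> 'x \<Rightarrow> real^'m \<Rightarrow> real \<Rightarrow> real" where
  "gamma_expr Lam p \<gamma> x \<theta> y = p x \<theta> y powr (\<gamma> + 1) / gamma_norm Lam p \<gamma> x \<theta>"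

definition gamma_loss :: "real measure \<Rightarrow> ('x \<Rightarrow> real^'m \<Rightarrow> real \<Rightarrow> real) \<Rightarrow> real
    \<Rightarrow> nat \<Rightarrow> (nat \<Rightarrow> 'x) \<Rightarrow> (nat \<Rightarrow> real) \<Rightarrow> real^'m \<Rightarrow> real" where
  "gamma_loss Lam p \<gamma> n X Y \<theta> =
     - (1 / real n) * (1 / \<gamma>) *
       (\<Sum>i<n. (gamma_expr Lam p \<gamma> (X i) \<theta> (Y i)) powr (\<gamma> / (\<gamma> + 1)))"

definition gamma_est :: "real measure \<Rightarrow> ('x \<Rightarrow> real^'m \<Rightarrow> real \<Rightarrow> real) \<Rightarrow> real
    \<Rightarrow> nat \<Rightarrow> (nat \<Rightarrow> 'x) \<Rightarrow> (nat \<Rightarrow> real) \<Rightarrow> real^'m \<Rightarrow> real^'m" where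
  "gamma_est Lam p \<gamma> n X Y \<theta> =
     (\<chi> j. frechet_derivative (gamma_loss Lam p \<gamma> n X Y) (at \<theta>) (axis j 1))"

definition diff_under_integral :: "real measure \<Rightarrow> (real^'m) set
    \<Rightarrow> ('x \<Rightarrow> real^'m \<Rightarrow> real \<Rightarrow> real) \<Rightarrow> bool" where
  "diff_under_integral Lam \<Theta> F \<longleftrightarrow>
     (\<forall>x. \<forall>\<theta>\<in>\<Theta>.
        (\<forall>h. integrable Lam (\<lambda>y. frechet_derivative (\<lambda>t. F x t y) (at \<theta>) h)) \<and>
        ((\<lambda>t. \<integral>y. F x t y \<partial>Lam) has_derivative
           (\<lambda>h. \<integral>y. frechet_derivative (\<lambda>t. F x t y) (at \<theta>) h \<partial>Lam)) (at \<theta>))"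

end

theory Submission
  imports Defs
begin

text \<open>Write q = p^(gamma+1), N = \<integral>q and a = gamma/(gamma+1). The logarithmic derivative of
  (q/N)^a is a (q/N)^a (dq/q - dN/N). Weighted by the true density p, the prefactor collapses:
  p (q/N)^a = q/N^a because (gamma+1) a = gamma. So the expectation of the score is
  a/N^a (\<integral>dq - dN), which vanishes because differentiation under the integral sign gives
  dN = \<integral>dq.\<close>

lemma has_derivative_divide_powr:
  fixes f g :: "'a::real_normed_vector \<Rightarrow> real"
  assumes f: "(f has_derivative f') (at x)" and g: "(g has_derivative g') (at x)"
    and f_pos: "0 < f x" and g_pos: "0 < g x"
  shows "((\<lambda>t. (f t / g t) powr a) has_derivative
           (\<lambda>h. a * (f x / g x) powr a * (f' h / f x - g' h / g x))) (at x)"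
proof (rule has_derivative_eq_rhs)
  show "((\<lambda>t. (f t / g t) powr a) has_derivative
      (\<lambda>h. (f x / g x) powr a * (0 * ln (f x / g x) +
             (f' h * g x - f x * g' h) / (g x * g x) * a / (f x / g x)))) (at x)"
    using f g f_pos g_pos by (intro has_derivative_powr has_derivative_divide' has_derivative_const) auto
  show "(\<lambda>h. (f x / g x) powr a * (0 * ln (f x / g x) +
             (f' h * g x - f x * g' h) / (g x * g x) * a / (f x / g x)))
      = (\<lambda>h. a * (f x / g x) powr a * (f' h / f x - g' h / g x))"
    using f_pos g_pos by (auto simp: field_simps)
qed

lemma integral_vec_lambda:
  fixes c :: "'n::finite \<Rightarrow> 'w \<Rightarrow> real"
  assumes "\<And>j. integrable M (c j)"
  shows "(\<integral>\<omega>. (\<chi> j. c j \<omega>) \<partial>M) = (\<chi> j. \<integral>\<omega>. c j \<omega> \<partial>M)"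
proof -
  have expand: "(\<chi> j. v j) = (\<Sum>j\<in>UNIV. v j *\<^sub>R axis j 1)" for v :: "'n \<Rightarrow> real"
    using basis_expansion[of "\<chi> j. v j"] by (simp add: scalar_mult_eq_scaleR)
  have "(\<integral>\<omega>. (\<chi> j. c j \<omega>) \<partial>M) = (\<integral>\<omega>. (\<Sum>j\<in>UNIV. c j \<omega> *\<^sub>R axis j 1) \<partial>M)"
    by (simp only: expand)
  also have "\<dots> = (\<Sum>j\<in>UNIV. (\<integral>\<omega>. c j \<omega> \<partial>M) *\<^sub>R axis j 1)"
    using assms by (simp add: integral_sum)
  also have "\<dots> = (\<chi> j. \<integral>\<omega>. c j \<omega> \<partial>M)"
    by (simp only: expand)
  finally show ?thesis .
qed

lemma gamma_est_eq_sum: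
  assumes "\<And>i. i < n \<Longrightarrow>
      ((\<lambda>t. gamma_expr Lam p \<gamma> (X i) t (Y i) powr (\<gamma> / (\<gamma> + 1))) has_derivative D i) (at \<theta>)"
  shows "gamma_est Lam p \<gamma> n X Y \<theta> =
           (\<chi> j. - (1 / real n) * (1 / \<gamma>) * (\<Sum>i<n. D i (axis j 1)))"
proof -
  have "(gamma_loss Lam p \<gamma> n X Y has_derivative
          (\<lambda>h. - (1 / real n) * (1 / \<gamma>) * (\<Sum>i<n. D i h))) (at \<theta>)"
    unfolding gamma_loss_def[abs_def] using assms
    by (intro has_derivative_mult_right has_derivative_sum) auto
  then show ?thesis
    unfolding gamma_est_def by (simp add: frechet_derivative_at[symmetric])
qed

definition gamma_score :: "real measure \<Rightarrow> ('x \<Rightarrow> real^'m \<Rightarrow> real \<Rightarrow> real) \<Rightarrow> real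
    \<Rightarrow> 'x \<Rightarrow> real^'m \<Rightarrow> real \<Rightarrow> real^'m \<Rightarrow> real" where
  "gamma_score Lam p \<gamma> x \<theta> y h =
     \<gamma> / (\<gamma> + 1) * gamma_expr Lam p \<gamma> x \<theta> y powr (\<gamma> / (\<gamma> + 1)) *
     (frechet_derivative (\<lambda>t. p x t y powr (\<gamma> + 1)) (at \<theta>) h / p x \<theta> y powr (\<gamma> + 1)
      - frechet_derivative (gamma_norm Lam p \<gamma> x) (at \<theta>) h / gamma_norm Lam p \<gamma> x \<theta>)"

lemma has_derivative_gamma_expr_powr:
  assumes p_diff: "(\<lambda>t. p x t y) differentiable (at \<theta>)" and p_pos: "0 < p x \<theta> y"
    and N_diff: "gamma_norm Lam p \<gamma> x differentiable (at \<theta>)"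
    and N_pos: "0 < gamma_norm Lam p \<gamma> x \<theta>"
  shows "((\<lambda>t. gamma_expr Lam p \<gamma> x t y powr (\<gamma> / (\<gamma> + 1))) has_derivative
           gamma_score Lam p \<gamma> x \<theta> y) (at \<theta>)"
proof -
  obtain D where D: "((\<lambda>t. p x t y) has_derivative D) (at \<theta>)"
    using p_diff unfolding differentiable_def by blast
  have "(\<lambda>t. p x t y powr (\<gamma> + 1)) differentiable (at \<theta>)"
    unfolding differentiable_def
    using has_derivative_powr[OF D has_derivative_const p_pos] by blast
  then show ?thesis
    unfolding gamma_expr_def gamma_score_def[abs_def] using p_pos N_pos N_diff
    by (intro has_derivative_divide_powr) (simp_all add: frechet_derivative_works[symmetric])
qed

lemma density_mult_gamma_expr_powr:
  assumes "0 < p x \<theta> y" and "0 \<le> gamma_norm Lam p \<gamma> x \<theta>" and "\<gamma> \<noteq> -1"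
  shows "p x \<theta> y * gamma_expr Lam p \<gamma> x \<theta> y powr (\<gamma> / (\<gamma> + 1)) =
           p x \<theta> y powr (\<gamma> + 1) / gamma_norm Lam p \<gamma> x \<theta> powr (\<gamma> / (\<gamma> + 1))"
proof -
  have "(p x \<theta> y powr (\<gamma> + 1)) powr (\<gamma> / (\<gamma> + 1)) = p x \<theta> y powr \<gamma>"
    using assms by (simp add: powr_powr)
  then show ?thesis
    using assms by (simp add: gamma_expr_def powr_divide powr_add[symmetric] powr_mult_base add.commute)
qed

context
  fixes Lam :: "real measure" and p :: "'x \<Rightarrow> real^'m \<Rightarrow> real \<Rightarrow> real" and \<gamma> :: real
    and x :: 'x and \<theta> :: "real^'m"
  assumes p_meas: "p x \<theta> \<in> borel_measurable Lam"
    and p_pos: "\<And>y. y \<in> space Lam \<Longrightarrow> 0 < p x \<theta> y"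
    and q_int: "integrable Lam (\<lambda>y. p x \<theta> y powr (\<gamma> + 1))"
    and Dq_int: "\<And>h. integrable Lam (\<lambda>y. frechet_derivative (\<lambda>t. p x t y powr (\<gamma> + 1)) (at \<theta>) h)"
    and N_deriv: "(gamma_norm Lam p \<gamma> x has_derivative
          (\<lambda>h. \<integral>y. frechet_derivative (\<lambda>t. p x t y powr (\<gamma> + 1)) (at \<theta>) h \<partial>Lam)) (at \<theta>)"
    and N_pos: "0 < gamma_norm Lam p \<gamma> x \<theta>"
    and gamma_ne1: "\<gamma> \<noteq> -1"
begin

lemma frechet_derivative_gamma_norm:
  "frechet_derivative (gamma_norm Lam p \<gamma> x) (at \<theta>) =
     (\<lambda>h. \<integral>y. frechet_derivative (\<lambda>t. p x t y powr (\<gamma> + 1)) (at \<theta>) h \<partial>Lam)"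
  using frechet_derivative_at[OF N_deriv] by simp

lemma density_mult_gamma_score:
  assumes y: "y \<in> space Lam"
  shows "p x \<theta> y * gamma_score Lam p \<gamma> x \<theta> y h =
    \<gamma> / (\<gamma> + 1) / gamma_norm Lam p \<gamma> x \<theta> powr (\<gamma> / (\<gamma> + 1)) *
    (frechet_derivative (\<lambda>t. p x t y powr (\<gamma> + 1)) (at \<theta>) h
     - p x \<theta> y powr (\<gamma> + 1) * frechet_derivative (gamma_norm Lam p \<gamma> x) (at \<theta>) h
       / gamma_norm Lam p \<gamma> x \<theta>)"
proof -
  have weight: "p x \<theta> y * gamma_expr Lam p \<gamma> x \<theta> y powr (\<gamma> / (\<gamma> + 1)) =
      p x \<theta> y powr (\<gamma> + 1) / gamma_norm Lam p \<gamma> x \<theta> powr (\<gamma> / (\<gamma> + 1))"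
    using p_pos[OF y] N_pos gamma_ne1 by (intro density_mult_gamma_expr_powr) auto
  have cancel: "P * (a * r * (D / Q - E / N)) = a / R * (D - Q * E / N)"
    if "P * r = Q / R" "Q \<noteq> 0" "R \<noteq> 0" for P r D Q E N R a :: real
  proof -
    have "P * (a * r * (D / Q - E / N)) = a * (P * r) * (D / Q - E / N)"
      by (simp only: mult_ac)
    also have "\<dots> = a * (Q / R) * (D / Q - E / N)"
      by (simp only: that(1))
    also have "\<dots> = a / R * (D - Q * E / N)"
      using that(2,3) by (simp add: field_simps)
    finally show ?thesis .
  qed
  show ?thesis
    unfolding gamma_score_def
    by (rule cancel[OF weight]) (use p_pos[OF y] N_pos in simp_all)
qed

lemma gamma_score_measurable: "(\<lambda>y. gamma_score Lam p \<gamma> x \<theta> y h) \<in> borel_measurable Lam"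
proof -
  have "(\<lambda>y. frechet_derivative (\<lambda>t. p x t y powr (\<gamma> + 1)) (at \<theta>) h) \<in> borel_measurable Lam"
    using Dq_int by blast
  then show ?thesis
    unfolding gamma_score_def gamma_expr_def using p_meas by measurable
qed

lemma integral_density_mult_gamma_score:
  shows "integrable Lam (\<lambda>y. p x \<theta> y * gamma_score Lam p \<gamma> x \<theta> y h)"
    and "(\<integral>y. p x \<theta> y * gamma_score Lam p \<gamma> x \<theta> y h \<partial>Lam) = 0"
proof -
  let ?c = "\<gamma> / (\<gamma> + 1) / gamma_norm Lam p \<gamma> x \<theta> powr (\<gamma> / (\<gamma> + 1))"
  let ?N = "gamma_norm Lam p \<gamma> x \<theta>"
  let ?dN = "frechet_derivative (gamma_norm Lam p \<gamma> x) (at \<theta>) h"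
  let ?f = "\<lambda>y. ?c * (frechet_derivative (\<lambda>t. p x t y powr (\<gamma> + 1)) (at \<theta>) h
                     - p x \<theta> y powr (\<gamma> + 1) * ?dN / ?N)"
  have eq: "\<And>y. y \<in> space Lam \<Longrightarrow> p x \<theta> y * gamma_score Lam p \<gamma> x \<theta> y h = ?f y"
    by (rule density_mult_gamma_score)
  have "integrable Lam ?f"
    using Dq_int q_int by simp
  then show "integrable Lam (\<lambda>y. p x \<theta> y * gamma_score Lam p \<gamma> x \<theta> y h)"
    using eq by (simp cong: Bochner_Integration.integrable_cong)
  have "(\<integral>y. p x \<theta> y * gamma_score Lam p \<gamma> x \<theta> y h \<partial>Lam) = (\<integral>y. ?f y \<partial>Lam)"
    using eq by (rule Bochner_Integration.integral_cong[OF refl])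
  also have "\<dots> = ?c * (?dN - ?N * ?dN / ?N)"
    using Dq_int q_int
    by (simp add: frechet_derivative_gamma_norm gamma_norm_def)
  also have "\<dots> = 0"
    using N_pos by simp
  finally show "(\<integral>y. p x \<theta> y * gamma_score Lam p \<gamma> x \<theta> y h \<partial>Lam) = 0" .
qed

lemma expectation_gamma_score:
  assumes distr: "distributed M Lam Y (\<lambda>y. ennreal (p x \<theta> y))"
  shows "integrable M (\<lambda>\<omega>. gamma_score Lam p \<gamma> x \<theta> (Y \<omega>) h)"
    and "(\<integral>\<omega>. gamma_score Lam p \<gamma> x \<theta> (Y \<omega>) h \<partial>M) = 0"
proof -
  have p_nonneg: "\<And>y. y \<in> space Lam \<Longrightarrow> 0 \<le> p x \<theta> y"
    using p_pos less_imp_le by blast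
  show "integrable M (\<lambda>\<omega>. gamma_score Lam p \<gamma> x \<theta> (Y \<omega>) h)"
    using distributed_integrable[OF distr gamma_score_measurable p_nonneg]
      integral_density_mult_gamma_score(1) by simp
  show "(\<integral>\<omega>. gamma_score Lam p \<gamma> x \<theta> (Y \<omega>) h \<partial>M) = 0"
    using distributed_integral[OF distr gamma_score_measurable p_nonneg]
      integral_density_mult_gamma_score(2) by simp
qed

end

theorem mainTheorem5:
  fixes Lam :: "real measure"
    and \<Theta> :: "(real^'m) set"
    and p :: "'x \<Rightarrow> real^'m \<Rightarrow> real \<Rightarrow> real"
    and \<gamma> :: real
    and n :: nat
    and X :: "nat \<Rightarrow> 'x"
    and M :: "'w measure"
    and Y :: "nat \<Rightarrow> 'w \<Rightarrow> real"
    and \<theta>0 :: "real^'m"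
  assumes sigma_finite: "sigma_finite_measure Lam"
    and open_Theta: "open \<Theta>"
    and meas: "\<And>x \<theta>. \<theta> \<in> \<Theta> \<Longrightarrow> p x \<theta> \<in> borel_measurable Lam"
    and pos: "\<And>x \<theta> y. \<theta> \<in> \<Theta> \<Longrightarrow> y \<in> space Lam \<Longrightarrow> p x \<theta> y > 0"
    and dens_int: "\<And>x \<theta>. \<theta> \<in> \<Theta> \<Longrightarrow> integrable Lam (p x \<theta>)"
    and dens_one: "\<And>x \<theta>. \<theta> \<in> \<Theta> \<Longrightarrow> (\<integral>y. p x \<theta> y \<partial>Lam) = 1"
    and diffble: "\<And>x \<theta> y. \<theta> \<in> \<Theta> \<Longrightarrow> y \<in> space Lam \<Longrightarrow>
                    (\<lambda>t. p x t y) differentiable (at \<theta>)"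
    and diff_int: "diff_under_integral Lam \<Theta> (\<lambda>x t y. p x t y powr (\<gamma> + 1))"
    and gamma_ne0: "\<gamma> \<noteq> 0"
    and gamma_ne1: "\<gamma> \<noteq> -1"
    and welldef_int: "\<And>x \<theta>. \<theta> \<in> \<Theta> \<Longrightarrow> integrable Lam (\<lambda>y. p x \<theta> y powr (\<gamma> + 1))"
    and welldef_pos: "\<And>x \<theta>. \<theta> \<in> \<Theta> \<Longrightarrow> gamma_norm Lam p \<gamma> x \<theta> > 0"
    and n_pos: "n > 0"
    and theta0: "\<theta>0 \<in> \<Theta>"
    and prob: "prob_space M"
    and true_distr: "\<And>i. i < n \<Longrightarrow>
                       distributed M Lam (Y i) (\<lambda>y. ennreal (p (X i) \<theta>0 y))"
  shows "(\<integral>\<omega>. gamma_est Lam p \<gamma> n X (\<lambda>i. Y i \<omega>) \<theta>0 \<partial>M) = 0"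
proof -
  let ?S = "\<lambda>i \<omega> h. gamma_score Lam p \<gamma> (X i) \<theta>0 (Y i \<omega>) h"
  have N_deriv: "(gamma_norm Lam p \<gamma> x has_derivative
          (\<lambda>h. \<integral>y. frechet_derivative (\<lambda>t. p x t y powr (\<gamma> + 1)) (at \<theta>0) h \<partial>Lam)) (at \<theta>0)"
    and Dq_int: "integrable Lam (\<lambda>y. frechet_derivative (\<lambda>t. p x t y powr (\<gamma> + 1)) (at \<theta>0) h)"
    for x h
    using diff_int theta0 unfolding diff_under_integral_def gamma_norm_def[abs_def] by auto
  have score_mean: "integrable M (\<lambda>\<omega>. ?S i \<omega> h)" "(\<integral>\<omega>. ?S i \<omega> h \<partial>M) = 0" if "i < n" for i h
    using expectation_gamma_score[OF meas[OF theta0] pos[OF theta0] welldef_int[OF theta0]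
        Dq_int N_deriv welldef_pos[OF theta0] gamma_ne1 true_distr[OF that]] by auto
  have est: "gamma_est Lam p \<gamma> n X (\<lambda>i. Y i \<omega>) \<theta>0 =
      (\<chi> j. - (1 / real n) * (1 / \<gamma>) * (\<Sum>i<n. ?S i \<omega> (axis j 1)))" if "\<omega> \<in> space M" for \<omega>
  proof (intro gamma_est_eq_sum has_derivative_gamma_expr_powr)
    fix i assume "i < n"
    then have "Y i \<omega> \<in> space Lam"
      using measurable_space[OF distributed_measurable[OF true_distr] that] by simp
    then show "(\<lambda>t. p (X i) t (Y i \<omega>)) differentiable (at \<theta>0)" "0 < p (X i) \<theta>0 (Y i \<omega>)"
      using diffble pos theta0 by auto
    show "gamma_norm Lam p \<gamma> (X i) differentiable (at \<theta>0)" "0 < gamma_norm Lam p \<gamma> (X i) \<theta>0"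
      using N_deriv welldef_pos theta0 unfolding differentiable_def by auto
  qed
  have "(\<integral>\<omega>. gamma_est Lam p \<gamma> n X (\<lambda>i. Y i \<omega>) \<theta>0 \<partial>M) =
      (\<integral>\<omega>. (\<chi> j. - (1 / real n) * (1 / \<gamma>) * (\<Sum>i<n. ?S i \<omega> (axis j 1))) \<partial>M)"
    by (rule Bochner_Integration.integral_cong) (simp_all add: est)
  also have "\<dots> = (\<chi> j. \<integral>\<omega>. - (1 / real n) * (1 / \<gamma>) * (\<Sum>i<n. ?S i \<omega> (axis j 1)) \<partial>M)"
    using score_mean by (intro integral_vec_lambda integrable_mult_right integrable_sum) auto
  also have "\<dots> = 0"
    using score_mean by (simp add: integral_sum vec_eq_iff)
  finally show ?thesis .
qed

end
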